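(* Let $\alpha>0$ and, for $u_0:\mathbb{R}\to\mathbb{R}$, let $u^*(x)=\sup_{t>0,\ |y-x|\leq\alpha t}P(\cdot,t)*|u_0|(y)$ with $P(x,t)=\frac{1}{\pi}\frac{t}{x^2+t^2}$. (i) If $u_0\in C(\mathbb{R})\cap L^p(\mathbb{R})$ for some $1\leq p<\infty$, then $u^*\in C(\mathbb{R})$. (ii) If $u_0$ is bounded and Lipschitz continuous, then $u^*$ is bounded and Lipschitz continuous with $\mathrm{Lip}(u^* )\leq\mathrm{Lip}(u_0)$.
   Context: $\mathrm{Lip}(u)=\sup_{x\neq y}|u(x)-u(y)|/|x-y|$. *)

theory Defs
  imports "HOL-Analysis.Analysis"
begin

definition poisson_kernel :: "real \<Rightarrow> real \<Rightarrow> real" where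
  "poisson_kernel x t = (1 / pi) * (t / (x\<^sup>2 + t\<^sup>2))"

text \<open>(P(.,t) * |u0|)(y) = integral of P(y - z, t) |u0 z| dz; nonnegative, so taken in ennreal.\<close>
definition poisson_conv_abs :: "(real \<Rightarrow> real) \<Rightarrow> real \<Rightarrow> real \<Rightarrow> ennreal" where
  "poisson_conv_abs u0 t y = (\<integral>\<^sup>+ z. ennreal (poisson_kernel (y - z) t * \<bar>u0 z\<bar>) \<partial>lborel)"

definition nontang_max :: "real \<Rightarrow> (real \<Rightarrow> real) \<Rightarrow> real \<Rightarrow> ennreal" where
  "nontang_max \<alpha> u0 x = (SUP (t, y) \<in> {(t, y). t > 0 \<and> \<bar>y - x\<bar> \<le> \<alpha> * t}. poisson_conv_abs u0 t y)"

definition Lip :: "(real \<Rightarrow> real) \<Rightarrow> real" where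
  "Lip u = Sup {\<bar>u x - u y\<bar> / \<bar>x - y\<bar> | x y. x \<noteq> y}"

end

theory Submission
  imports Defs "HOL-Probability.Sinc_Integral"
begin

text \<open>
  The Poisson kernel is a probability density, so a pointwise bound on the integrand of a
  Poisson average bounds the average itself. Translating the cone of the maximal function
  by h changes each Poisson average by at most the Poisson average of
  \<open>\<bar>\<bar>u0 (z + h)\<bar> - \<bar>u0 z\<bar>\<bar>\<close>, and hence changes the maximal function by at most the
  supremum of these quantities.

  For a Lipschitz \<open>u0\<close> this supremum is at most \<open>Lip u0 * \<bar>h\<bar>\<close>. For a continuous \<open>u0\<close> in
  \<open>L\<^sup>p\<close> one splits the line: near the cone \<open>u0\<close> is uniformly continuous, while far from it
  (distance \<open>T\<close>) the kernel is at most \<open>1 / (\<pi> T)\<close> and \<open>\<bar>u0\<bar> \<le> \<epsilon> + \<epsilon>\<^bsup>1-p\<^esup> \<bar>u0\<bar>\<^sup>p\<close>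
  has an integrable tail.
\<close>

lemma nn_integral_inverse_1_plus_square:
  "(\<integral>\<^sup>+x. ennreal (inverse (1 + x\<^sup>2)) \<partial>lborel) = ennreal pi"
proof -
  have "integrable lborel (\<lambda>x::real. inverse (1 + x\<^sup>2))"
    using integrable_inverse_1_plus_square by (simp add: set_integrable_def einterval_eq_UNIV)
  moreover have "integral\<^sup>L lborel (\<lambda>x::real. inverse (1 + x\<^sup>2)) = pi"
    using LBINT_inverse_1_plus_square
    by (simp add: interval_lebesgue_integral_def set_lebesgue_integral_def einterval_eq_UNIV)
  ultimately show ?thesis
    by (subst nn_integral_eq_integral) (auto simp: add_pos_nonneg)
qed

lemma poisson_kernel_nonneg: "t \<ge> 0 \<Longrightarrow> 0 \<le> poisson_kernel x t"
  by (simp add: poisson_kernel_def)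

lemma borel_measurable_poisson_kernel[measurable]:
  "(\<lambda>z. poisson_kernel (y - z) t) \<in> borel_measurable borel"
  unfolding poisson_kernel_def by measurable

lemma nn_integral_poisson_kernel:
  assumes t: "t > 0"
  shows "(\<integral>\<^sup>+z. ennreal (poisson_kernel (y - z) t) \<partial>lborel) = 1"
proof -
  have scaled: "ennreal (poisson_kernel (y - (y + t * x)) t)
      = ennreal (1 / (pi * t)) * ennreal (inverse (1 + x\<^sup>2))" for x
  proof -
    have "(y - (y + t * x))\<^sup>2 + t\<^sup>2 = t * (t * (1 + x\<^sup>2))"
      by (simp add: power2_eq_square algebra_simps)
    moreover have "t / (t * (t * (1 + x\<^sup>2))) = 1 / (t * (1 + x\<^sup>2))"
      using t by (simp add: add_pos_nonneg)
    ultimately have "poisson_kernel (y - (y + t * x)) t = 1 / (pi * t) * inverse (1 + x\<^sup>2)"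
      unfolding poisson_kernel_def by (simp add: field_simps)
    then show ?thesis
      using t by (simp add: ennreal_mult[symmetric] add_pos_nonneg)
  qed
  have "(\<integral>\<^sup>+z. ennreal (poisson_kernel (y - z) t) \<partial>lborel)
      = \<bar>t\<bar> * (\<integral>\<^sup>+x. ennreal (poisson_kernel (y - (y + t * x)) t) \<partial>lborel)"
    by (rule nn_integral_real_affine) (use t in auto)
  also have "\<dots> = \<bar>t\<bar> * (\<integral>\<^sup>+x. ennreal (1 / (pi * t)) * ennreal (inverse (1 + x\<^sup>2)) \<partial>lborel)"
    by (simp only: scaled)
  also have "\<dots> = \<bar>t\<bar> * (ennreal (1 / (pi * t)) * ennreal pi)"
    by (simp add: nn_integral_cmult nn_integral_inverse_1_plus_square)
  also have "\<dots> = 1"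
    using t by (simp add: ennreal_mult[symmetric] ennreal_mult'[symmetric] field_simps)
  finally show ?thesis .
qed

text \<open>At a point \<open>y\<close> of the cone over \<open>x0\<close>, the kernel is uniformly small outside
  \<open>cball x0 ((\<alpha> + 1) * T)\<close>: either \<open>t \<ge> T\<close>, or \<open>z\<close> is at distance more than \<open>T\<close> from \<open>y\<close>.\<close>
lemma poisson_kernel_le_far:
  assumes t: "t > 0" and T: "T > 0" and \<alpha>: "\<alpha> \<ge> 0" and y: "\<bar>y - x0\<bar> \<le> \<alpha> * t"
    and z: "\<bar>z - x0\<bar> > (\<alpha> + 1) * T"
  shows "poisson_kernel (y - z) t \<le> 1 / (pi * T)"
proof -
  have key: "t * T \<le> (y - z)\<^sup>2 + t\<^sup>2"
  proof (cases "t \<ge> T")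
    case True
    then have "t * T \<le> t * t" using t by (intro mult_left_mono) auto
    then show ?thesis by (simp add: power2_eq_square add_increasing)
  next
    case False
    then have "\<alpha> * t \<le> \<alpha> * T" using \<alpha> by (intro mult_left_mono) auto
    then have "\<bar>y - z\<bar> > T" using y z by (auto simp: algebra_simps abs_if split: if_splits)
    then have "T * T \<le> (y - z)\<^sup>2"
      using T by (metis abs_le_square_iff less_imp_le abs_of_pos power2_eq_square)
    moreover have "t * T \<le> T * T" using False T by (intro mult_right_mono) auto
    ultimately show ?thesis by (simp add: add_increasing2)
  qed
  have "(y - z)\<^sup>2 + t\<^sup>2 > 0"
    using t by (simp add: add_nonneg_pos)
  then have "t / ((y - z)\<^sup>2 + t\<^sup>2) \<le> 1 / T"
    using key T by (simp add: divide_simps mult.commute)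
  from mult_left_mono[OF this, of "1 / pi"] show ?thesis
    unfolding poisson_kernel_def by simp
qed

lemma nn_integral_poisson_le:
  fixes \<phi> G :: "real \<Rightarrow> real"
  assumes t: "t > 0" and A: "A \<ge> 0" and B: "B \<ge> 0"
    and [measurable]: "\<phi> \<in> borel_measurable borel" "G \<in> borel_measurable borel"
    and G_nonneg: "\<And>z. G z \<ge> 0" and G_int: "(\<integral>\<^sup>+z. ennreal (G z) \<partial>lborel) = ennreal I"
    and I: "I \<ge> 0"
    and \<phi>_le: "\<And>z. \<phi> z \<le> poisson_kernel (y - z) t * A + B * G z"
  shows "(\<integral>\<^sup>+z. ennreal (\<phi> z) \<partial>lborel) \<le> ennreal (A + B * I)"
proof -
  have "(\<integral>\<^sup>+z. ennreal (\<phi> z) \<partial>lborel)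
     \<le> (\<integral>\<^sup>+z. ennreal (poisson_kernel (y - z) t) * ennreal A + ennreal B * ennreal (G z) \<partial>lborel)"
  proof (rule nn_integral_mono)
    fix z
    have "ennreal (\<phi> z) \<le> ennreal (poisson_kernel (y - z) t * A + B * G z)"
      using \<phi>_le by (rule ennreal_leI)
    also have "\<dots> = ennreal (poisson_kernel (y - z) t) * ennreal A + ennreal B * ennreal (G z)"
      using poisson_kernel_nonneg[of t "y - z"] t A B G_nonneg[of z]
      by (simp add: ennreal_plus ennreal_mult)
    finally show "ennreal (\<phi> z) \<le> \<dots>" .
  qed
  also have "\<dots> = (\<integral>\<^sup>+z. ennreal (poisson_kernel (y - z) t) \<partial>lborel) * ennreal A
                 + ennreal B * (\<integral>\<^sup>+z. ennreal (G z) \<partial>lborel)"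
    by (subst nn_integral_add) (auto simp: nn_integral_multc nn_integral_cmult)
  also have "\<dots> = ennreal (A + B * I)"
    using A B I by (simp add: nn_integral_poisson_kernel[OF t] G_int ennreal_plus ennreal_mult)
  finally show ?thesis .
qed

lemma nn_integral_poisson_le_const:
  fixes \<phi> :: "real \<Rightarrow> real"
  assumes t: "t > 0" and [measurable]: "\<phi> \<in> borel_measurable borel"
    and \<phi>_le: "\<And>z. \<phi> z \<le> A" and A: "A \<ge> 0"
  shows "(\<integral>\<^sup>+z. ennreal (poisson_kernel (y - z) t * \<phi> z) \<partial>lborel) \<le> ennreal A"
proof -
  have "(\<integral>\<^sup>+z. ennreal (poisson_kernel (y - z) t * \<phi> z) \<partial>lborel) \<le> ennreal (A + 0 * 0)"
  proof (rule nn_integral_poisson_le[OF t A order.refl, where G = "\<lambda>_. 0"])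
    fix z
    show "poisson_kernel (y - z) t * \<phi> z \<le> poisson_kernel (y - z) t * A + 0 * 0"
      using poisson_kernel_nonneg[of t "y - z"] t \<phi>_le[of z] by (simp add: mult_left_mono)
  qed auto
  then show ?thesis by simp
qed

lemma nn_integral_poisson_le_split:
  fixes \<phi> G :: "real \<Rightarrow> real"
  assumes t: "t > 0" and T: "T > 0" and \<alpha>: "\<alpha> \<ge> 0" and y: "\<bar>y - x0\<bar> \<le> \<alpha> * t"
    and E: "E \<ge> 0" and K: "K \<ge> 0"
    and [measurable]: "\<phi> \<in> borel_measurable borel" "G \<in> borel_measurable borel"
    and G_nonneg: "\<And>z. G z \<ge> 0" and G_int: "(\<integral>\<^sup>+z. ennreal (G z) \<partial>lborel) = ennreal I"
    and I: "I \<ge> 0"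
    and near: "\<And>z. \<bar>z - x0\<bar> \<le> (\<alpha> + 1) * T \<Longrightarrow> \<phi> z \<le> E"
    and far: "\<And>z. \<phi> z \<le> E + K * G z"
  shows "(\<integral>\<^sup>+z. ennreal (poisson_kernel (y - z) t * \<phi> z) \<partial>lborel) \<le> ennreal (E + K / (pi * T) * I)"
proof (rule nn_integral_poisson_le[OF t E _ _ _ G_nonneg G_int I])
  fix z
  have P: "poisson_kernel (y - z) t \<ge> 0" using poisson_kernel_nonneg t by simp
  have KG: "0 \<le> K / (pi * T) * G z" using K T G_nonneg[of z] by simp
  show "poisson_kernel (y - z) t * \<phi> z \<le> poisson_kernel (y - z) t * E + K / (pi * T) * G z"
  proof (cases "\<bar>z - x0\<bar> \<le> (\<alpha> + 1) * T")
    case True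
    then show ?thesis using near P KG by (simp add: mult_left_mono add_increasing2)
  next
    case False
    then have "poisson_kernel (y - z) t \<le> 1 / (pi * T)"
      using poisson_kernel_le_far[OF t T \<alpha> y] by simp
    then have "poisson_kernel (y - z) t * (K * G z) \<le> 1 / (pi * T) * (K * G z)"
      using K G_nonneg[of z] by (intro mult_right_mono) auto
    moreover have "poisson_kernel (y - z) t * \<phi> z \<le> poisson_kernel (y - z) t * (E + K * G z)"
      using far P by (simp add: mult_left_mono)
    ultimately show ?thesis by (simp add: distrib_left)
  qed
qed (use K T in auto)

lemma nn_integral_weighted_le_add_abs_diff:
  fixes w a b :: "real \<Rightarrow> real"
  assumes [measurable]: "w \<in> borel_measurable M" "a \<in> borel_measurable M" "b \<in> borel_measurable M"
    and w: "\<And>z. w z \<ge> 0" and b: "\<And>z. b z \<ge> 0"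
  shows "(\<integral>\<^sup>+z. ennreal (w z * a z) \<partial>M)
      \<le> (\<integral>\<^sup>+z. ennreal (w z * b z) \<partial>M) + (\<integral>\<^sup>+z. ennreal (w z * \<bar>a z - b z\<bar>) \<partial>M)"
proof -
  have "ennreal (w z * a z) \<le> ennreal (w z * b z) + ennreal (w z * \<bar>a z - b z\<bar>)" for z
  proof -
    have "w z * a z \<le> w z * b z + w z * \<bar>a z - b z\<bar>"
      using w[of z] by (simp add: distrib_left[symmetric] mult_left_mono)
    then show ?thesis
      using w[of z] b[of z] by (simp add: ennreal_leI ennreal_plus[symmetric] del: ennreal_plus)
  qed
  then show ?thesis
    by (subst nn_integral_add[symmetric]) (auto intro: nn_integral_mono)
qed

lemma poisson_conv_abs_translate_le:
  fixes y h t :: real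
  assumes [measurable]: "u0 \<in> borel_measurable borel" and t: "t > 0"
  defines "D \<equiv> (\<integral>\<^sup>+z. ennreal (poisson_kernel (y - z) t * \<bar>\<bar>u0 (z + h)\<bar> - \<bar>u0 z\<bar>\<bar>) \<partial>lborel)"
  shows "poisson_conv_abs u0 t (y + h) \<le> poisson_conv_abs u0 t y + D"
    and "poisson_conv_abs u0 t y \<le> poisson_conv_abs u0 t (y + h) + D"
proof -
  have shift: "poisson_conv_abs u0 t (y + h)
      = (\<integral>\<^sup>+z. ennreal (poisson_kernel (y - z) t * \<bar>u0 (z + h)\<bar>) \<partial>lborel)"
    unfolding poisson_conv_abs_def
    using nn_integral_real_affine[of "\<lambda>z. ennreal (poisson_kernel (y + h - z) t * \<bar>u0 z\<bar>)" 1 h]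
    by (simp add: add.commute)
  have P: "\<And>z. poisson_kernel (y - z) t \<ge> 0" using poisson_kernel_nonneg t by simp
  show "poisson_conv_abs u0 t (y + h) \<le> poisson_conv_abs u0 t y + D"
    unfolding shift unfolding poisson_conv_abs_def D_def
    by (rule nn_integral_weighted_le_add_abs_diff[OF _ _ _ P]) simp_all
  show "poisson_conv_abs u0 t y \<le> poisson_conv_abs u0 t (y + h) + D"
    unfolding shift unfolding poisson_conv_abs_def D_def
    using nn_integral_weighted_le_add_abs_diff[OF _ _ _ P,
        where M = lborel and a = "\<lambda>z. \<bar>u0 z\<bar>" and b = "\<lambda>z. \<bar>u0 (z + h)\<bar>"]
    by (simp add: abs_minus_commute)
qed

lemma enn2real_abs_diff_le:
  fixes a b :: ennreal
  assumes "a \<le> b + ennreal e" "b \<le> a + ennreal e" "a \<noteq> \<infinity>" "b \<noteq> \<infinity>" "e \<ge> 0"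
  shows "\<bar>enn2real a - enn2real b\<bar> \<le> e"
proof -
  obtain a' b' where "a = ennreal a'" "a' \<ge> 0" "b = ennreal b'" "b' \<ge> 0"
    using assms(3,4) by (cases a; cases b) auto
  with assms(1,2,5) show ?thesis
    by (auto simp: ennreal_plus[symmetric] simp del: ennreal_plus)
qed

lemma nontang_max_translate_abs_diff_le:
  fixes x h \<eta> :: real
  assumes [measurable]: "u0 \<in> borel_measurable borel" and \<eta>: "\<eta> \<ge> 0"
    and fin: "nontang_max \<alpha> u0 x \<noteq> \<infinity>" "nontang_max \<alpha> u0 (x + h) \<noteq> \<infinity>"
    and D: "\<And>t y. t > 0 \<Longrightarrow> \<bar>y - x\<bar> \<le> \<alpha> * t \<Longrightarrow>
      (\<integral>\<^sup>+z. ennreal (poisson_kernel (y - z) t * \<bar>\<bar>u0 (z + h)\<bar> - \<bar>u0 z\<bar>\<bar>) \<partial>lborel) \<le> ennreal \<eta>"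
  shows "\<bar>enn2real (nontang_max \<alpha> u0 (x + h)) - enn2real (nontang_max \<alpha> u0 x)\<bar> \<le> \<eta>"
proof -
  have conv: "poisson_conv_abs u0 t (y + h) \<le> poisson_conv_abs u0 t y + ennreal \<eta>"
    "poisson_conv_abs u0 t y \<le> poisson_conv_abs u0 t (y + h) + ennreal \<eta>"
    if t: "t > 0" and y: "\<bar>y - x\<bar> \<le> \<alpha> * t" for t y
    using poisson_conv_abs_translate_le[OF _ t, of u0 y h] D[OF t y]
    by (auto intro: order.trans add_left_mono)
  have "nontang_max \<alpha> u0 (x + h) \<le> nontang_max \<alpha> u0 x + ennreal \<eta>"
    unfolding nontang_max_def
  proof (rule SUP_least, clarify)
    fix t y assume t: "t > 0" and y: "\<bar>y - (x + h)\<bar> \<le> \<alpha> * t"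
    then have y': "\<bar>(y - h) - x\<bar> \<le> \<alpha> * t" by (simp add: algebra_simps)
    have "poisson_conv_abs u0 t y \<le> poisson_conv_abs u0 t (y - h) + ennreal \<eta>"
      using conv(1)[OF t y'] by simp
    also have "\<dots> \<le> (SUP (t, y) \<in> {(t, y). t > 0 \<and> \<bar>y - x\<bar> \<le> \<alpha> * t}. poisson_conv_abs u0 t y) + ennreal \<eta>"
      by (intro add_right_mono SUP_upper2[of "(t, y - h)"]) (use t y' in auto)
    finally show "poisson_conv_abs u0 t y \<le> \<dots>" .
  qed
  moreover have "nontang_max \<alpha> u0 x \<le> nontang_max \<alpha> u0 (x + h) + ennreal \<eta>"
    unfolding nontang_max_def
  proof (rule SUP_least, clarify)
    fix t y assume t: "t > 0" and y: "\<bar>y - x\<bar> \<le> \<alpha> * t"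
    then have y': "\<bar>(y + h) - (x + h)\<bar> \<le> \<alpha> * t" by simp
    have "poisson_conv_abs u0 t y \<le> poisson_conv_abs u0 t (y + h) + ennreal \<eta>"
      using conv(2)[OF t y] .
    also have "\<dots> \<le> (SUP (t, y) \<in> {(t, y). t > 0 \<and> \<bar>y - (x + h)\<bar> \<le> \<alpha> * t}. poisson_conv_abs u0 t y) + ennreal \<eta>"
      by (intro add_right_mono SUP_upper2[of "(t, y + h)"]) (use t y' in auto)
    finally show "poisson_conv_abs u0 t y \<le> \<dots>" .
  qed
  ultimately show ?thesis
    using enn2real_abs_diff_le fin \<eta> by blast
qed

text \<open>Some Lipschitz constant is needed: \<open>Lip\<close> is a \<open>Sup\<close> of reals, unspecified for an
  unbounded set of difference quotients.\<close>
lemma abs_diff_le_Lip: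
  assumes "L-lipschitz_on UNIV u"
  shows "\<bar>u x - u y\<bar> \<le> Lip u * \<bar>x - y\<bar>"
proof (cases "x = y")
  case False
  have bdd: "bdd_above {\<bar>u x - u y\<bar> / \<bar>x - y\<bar> | x y. x \<noteq> y}"
  proof (rule bdd_aboveI, clarify)
    fix x y :: real assume "x \<noteq> y"
    have "\<bar>u x - u y\<bar> \<le> L * \<bar>x - y\<bar>"
      using lipschitz_onD[OF assms] by (simp add: dist_real_def)
    with \<open>x \<noteq> y\<close> show "\<bar>u x - u y\<bar> / \<bar>x - y\<bar> \<le> L" by (simp add: divide_le_eq)
  qed
  have "\<bar>u x - u y\<bar> / \<bar>x - y\<bar> \<le> Lip u"
    unfolding Lip_def by (rule cSup_upper[OF _ bdd]) (use False in auto)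
  then show ?thesis using False by (simp add: divide_le_eq)
qed simp

lemma Lip_le:
  fixes u :: "real \<Rightarrow> real"
  assumes "\<And>x y. \<bar>u x - u y\<bar> \<le> L * \<bar>x - y\<bar>"
  shows "Lip u \<le> L"
  unfolding Lip_def
proof (rule cSup_least)
  show "{\<bar>u x - u y\<bar> / \<bar>x - y\<bar> | x y. x \<noteq> y} \<noteq> {}"
    by (auto intro: exI[of _ 0] exI[of _ 1])
qed (use assms in \<open>auto simp: divide_le_eq\<close>)

lemma nontang_max_bounded_lipschitz:
  fixes \<alpha> :: real and u0 :: "real \<Rightarrow> real"
  assumes bounded: "bounded (range u0)" and lip: "L-lipschitz_on UNIV u0"
  defines "U \<equiv> \<lambda>x. enn2real (nontang_max \<alpha> u0 x)"
  shows "(\<forall>x. nontang_max \<alpha> u0 x \<noteq> \<infinity>) \<and> bounded (range U)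
    \<and> (Lip u0)-lipschitz_on UNIV U \<and> Lip U \<le> Lip u0"
proof -
  have u0_meas[measurable]: "u0 \<in> borel_measurable borel"
    using borel_measurable_continuous_onI[OF lipschitz_on_continuous_on[OF lip]] .
  obtain M where M: "\<And>x. \<bar>u0 x\<bar> \<le> M"
    using bounded unfolding bounded_iff by auto
  then have M0: "M \<ge> 0" by (meson abs_ge_zero order.trans)
  have "poisson_conv_abs u0 t y \<le> ennreal M" if "t > 0" for t y
    unfolding poisson_conv_abs_def by (rule nn_integral_poisson_le_const[OF that _ M M0]) simp
  then have N_le: "nontang_max \<alpha> u0 x \<le> ennreal M" for x
    unfolding nontang_max_def by (intro SUP_least) auto
  have fin: "nontang_max \<alpha> u0 x \<noteq> \<infinity>" for x
    using N_le[of x] by (auto simp: top_unique)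
  have Lip0: "Lip u0 \<ge> 0"
    using abs_diff_le_Lip[OF lip, of 1 0] by simp
  have U_lip: "\<bar>U x - U y\<bar> \<le> Lip u0 * \<bar>x - y\<bar>" for x y
  proof -
    have "\<bar>\<bar>u0 (z + (x - y))\<bar> - \<bar>u0 z\<bar>\<bar> \<le> Lip u0 * \<bar>x - y\<bar>" for z
      using abs_diff_le_Lip[OF lip, of "z + (x - y)" z] by simp
    then have "(\<integral>\<^sup>+z. ennreal (poisson_kernel (w - z) t * \<bar>\<bar>u0 (z + (x - y))\<bar> - \<bar>u0 z\<bar>\<bar>) \<partial>lborel)
        \<le> ennreal (Lip u0 * \<bar>x - y\<bar>)" if "t > 0" for t w
      using Lip0 by (intro nn_integral_poisson_le_const[OF that]) simp_all
    then have "\<bar>U (y + (x - y)) - U y\<bar> \<le> Lip u0 * \<bar>x - y\<bar>"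
      unfolding U_def using Lip0 by (intro nontang_max_translate_abs_diff_le[OF u0_meas _ fin fin]) simp_all
    then show ?thesis by simp
  qed
  have "(Lip u0)-lipschitz_on UNIV U"
    using U_lip Lip0 by (intro lipschitz_onI) (auto simp: dist_real_def)
  moreover have "bounded (range U)"
    unfolding bounded_iff U_def using enn2real_leI[OF M0 N_le] by auto
  moreover have "Lip U \<le> Lip u0"
    using U_lip by (rule Lip_le)
  ultimately show ?thesis
    using fin by blast
qed

text \<open>Splitting \<open>a\<close> at the threshold \<open>e\<close> converts \<open>L\<^sup>p\<close>-integrability into the tail bounds
  required by \<open>nn_integral_poisson_le_split\<close>.\<close>
lemma le_add_powr_of_ge_1:
  fixes a e p :: real
  assumes e: "e > 0" and p: "p \<ge> 1" and a: "a \<ge> 0"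
  shows "a \<le> e + e powr (1 - p) * a powr p"
proof (cases "a \<le> e")
  case True
  then show ?thesis by (simp add: add_increasing2)
next
  case False
  then have "a = a powr p * a powr (1 - p)"
    using e by (simp add: powr_add[symmetric])
  also have "\<dots> \<le> a powr p * e powr (1 - p)"
    using False e p by (intro mult_left_mono powr_mono2') auto
  finally show ?thesis
    using e by (simp add: mult.commute add_increasing)
qed

lemma nontang_max_finite_Lp:
  fixes \<alpha> :: real and u0 :: "real \<Rightarrow> real"
  assumes \<alpha>: "\<alpha> \<ge> 0" and cont: "continuous_on UNIV u0" and p: "p \<ge> 1"
    and int: "integrable lborel (\<lambda>x. \<bar>u0 x\<bar> powr p)"
  shows "nontang_max \<alpha> u0 x0 \<noteq> \<infinity>"
proof -
  have [measurable]: "u0 \<in> borel_measurable borel"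
    using borel_measurable_continuous_onI[OF cont] .
  define I where "I = (\<integral>z. \<bar>u0 z\<bar> powr p \<partial>lborel)"
  have I: "I \<ge> 0" "(\<integral>\<^sup>+z. ennreal (\<bar>u0 z\<bar> powr p) \<partial>lborel) = ennreal I"
    unfolding I_def using int by (simp_all add: nn_integral_eq_integral)
  have "bounded (u0 ` cball x0 (\<alpha> + 1))"
    by (intro compact_imp_bounded compact_continuous_image continuous_on_subset[OF cont]) auto
  then obtain M where M: "\<And>z. z \<in> cball x0 (\<alpha> + 1) \<Longrightarrow> \<bar>u0 z\<bar> \<le> M" and M0: "M \<ge> 0"
    unfolding bounded_iff by (metis image_eqI real_norm_def abs_ge_zero order.trans)
  have "poisson_conv_abs u0 t y \<le> ennreal ((M + 1) + 1 / (pi * 1) * I)"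
    if t: "t > 0" and y: "\<bar>y - x0\<bar> \<le> \<alpha> * t" for t y
    unfolding poisson_conv_abs_def
  proof (rule nn_integral_poisson_le_split[OF t _ \<alpha> y _ _ _ _ _ I(2) I(1)])
    fix z
    show "\<bar>u0 z\<bar> \<le> M + 1" if "\<bar>z - x0\<bar> \<le> (\<alpha> + 1) * 1"
      using M[of z] that by (simp add: dist_real_def abs_minus_commute)
    show "\<bar>u0 z\<bar> \<le> M + 1 + 1 * \<bar>u0 z\<bar> powr p"
      using le_add_powr_of_ge_1[of 1 p "\<bar>u0 z\<bar>"] p M0 by simp
  qed (use M0 in auto)
  then have "nontang_max \<alpha> u0 x0 \<le> ennreal ((M + 1) + 1 / (pi * 1) * I)"
    unfolding nontang_max_def by (intro SUP_least) auto
  then show ?thesis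
    by (auto simp: top_unique)
qed

lemma nn_integral_translate_add_self:
  fixes g :: "real \<Rightarrow> real"
  assumes [measurable]: "g \<in> borel_measurable borel" and g_nonneg: "\<And>z. g z \<ge> 0"
    and g_int: "(\<integral>\<^sup>+z. ennreal (g z) \<partial>lborel) = ennreal I" and I: "I \<ge> 0"
  shows "(\<integral>\<^sup>+z. ennreal (g (z + h) + g z) \<partial>lborel) = ennreal (2 * I)"
proof -
  have "(\<integral>\<^sup>+z. ennreal (g (z + h)) \<partial>lborel) = ennreal I"
    using nn_integral_real_affine[of "\<lambda>z. ennreal (g z)" 1 h] g_int by (simp add: add.commute)
  then have "(\<integral>\<^sup>+z. ennreal (g (z + h)) + ennreal (g z) \<partial>lborel) = ennreal I + ennreal I"
    by (subst nn_integral_add) (auto simp: g_int)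
  then show ?thesis
    using I g_nonneg by (simp add: ennreal_plus[symmetric] del: ennreal_plus)
qed

lemma nn_integral_poisson_translate_diff_small_Lp:
  fixes \<alpha> e :: real and u0 :: "real \<Rightarrow> real"
  assumes \<alpha>: "\<alpha> \<ge> 0" and cont: "continuous_on UNIV u0" and p: "p \<ge> 1"
    and int: "integrable lborel (\<lambda>x. \<bar>u0 x\<bar> powr p)" and e: "e > 0"
  obtains d where "d > 0"
    and "\<And>h t y. \<bar>h\<bar> < d \<Longrightarrow> t > 0 \<Longrightarrow> \<bar>y - x0\<bar> \<le> \<alpha> * t \<Longrightarrow>
      (\<integral>\<^sup>+z. ennreal (poisson_kernel (y - z) t * \<bar>\<bar>u0 (z + h)\<bar> - \<bar>u0 z\<bar>\<bar>) \<partial>lborel) \<le> ennreal (3 * e)"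
proof -
  have [measurable]: "u0 \<in> borel_measurable borel"
    using borel_measurable_continuous_onI[OF cont] .
  define g where "g z = \<bar>u0 z\<bar> powr p" for z
  have [measurable]: "g \<in> borel_measurable borel"
    unfolding g_def by measurable
  have g_nonneg: "g z \<ge> 0" for z
    by (simp add: g_def)
  define I where "I = (\<integral>z. g z \<partial>lborel)"
  have I: "I \<ge> 0" "(\<integral>\<^sup>+z. ennreal (g z) \<partial>lborel) = ennreal I"
    unfolding I_def g_def using int by (simp_all add: nn_integral_eq_integral)
  define K where "K = e powr (1 - p)"
  define T where "T = (2 * K * I + 1) / (pi * e)"
  have K: "K \<ge> 0" by (simp add: K_def)
  have T: "T > 0"
    unfolding T_def using K I e by (simp add: add_nonneg_pos)
  have tail: "K / (pi * T) * (2 * I) \<le> e"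
  proof -
    have "pi * T = (2 * K * I + 1) / e"
      unfolding T_def by simp
    then have "K / (pi * T) * (2 * I) = e * (2 * K * I / (2 * K * I + 1))"
      by simp
    also have "\<dots> \<le> e * 1"
      using e mult_nonneg_nonneg[OF K I(1)] by (intro mult_left_mono) (auto simp: divide_le_eq)
    finally show ?thesis by simp
  qed
  define R where "R = (\<alpha> + 1) * T + 1"
  have "uniformly_continuous_on (cball x0 R) (\<lambda>z. \<bar>u0 z\<bar>)"
    by (intro compact_uniformly_continuous continuous_on_subset[OF continuous_on_rabs[OF cont]]) auto
  then obtain d where d: "d > 0" and
    uc: "\<And>z z'. z \<in> cball x0 R \<Longrightarrow> z' \<in> cball x0 R \<Longrightarrow> dist z' z < d \<Longrightarrow> \<bar>\<bar>u0 z'\<bar> - \<bar>u0 z\<bar>\<bar> < e"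
    unfolding uniformly_continuous_on_def dist_real_def using e by metis
  have "(\<integral>\<^sup>+z. ennreal (poisson_kernel (y - z) t * \<bar>\<bar>u0 (z + h)\<bar> - \<bar>u0 z\<bar>\<bar>) \<partial>lborel) \<le> ennreal (3 * e)"
    if h: "\<bar>h\<bar> < min d 1" and t: "t > 0" and y: "\<bar>y - x0\<bar> \<le> \<alpha> * t" for h t y
  proof -
    have "(\<integral>\<^sup>+z. ennreal (poisson_kernel (y - z) t * \<bar>\<bar>u0 (z + h)\<bar> - \<bar>u0 z\<bar>\<bar>) \<partial>lborel)
        \<le> ennreal (2 * e + K / (pi * T) * (2 * I))"
    proof (rule nn_integral_poisson_le_split[OF t T \<alpha> y _ K _ _ _
          nn_integral_translate_add_self[OF _ g_nonneg I(2,1)]])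
      fix z
      show "\<bar>\<bar>u0 (z + h)\<bar> - \<bar>u0 z\<bar>\<bar> \<le> 2 * e" if "\<bar>z - x0\<bar> \<le> (\<alpha> + 1) * T"
      proof -
        have "z \<in> cball x0 R" "z + h \<in> cball x0 R"
          using that h by (auto simp: R_def dist_real_def)
        then show ?thesis
          using uc[of z "z + h"] h e by (simp add: dist_real_def)
      qed
      have "\<bar>u0 w\<bar> \<le> e + K * g w" for w
        unfolding K_def g_def using le_add_powr_of_ge_1[OF e p] by simp
      from this[of z] this[of "z + h"]
      show "\<bar>\<bar>u0 (z + h)\<bar> - \<bar>u0 z\<bar>\<bar> \<le> 2 * e + K * (g (z + h) + g z)"
        by (simp add: distrib_left)
    qed (use e I g_nonneg in auto)
    also have "\<dots> \<le> ennreal (3 * e)"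
      using tail by (intro ennreal_leI) simp
    finally show ?thesis .
  qed
  then show ?thesis
    using that[of "min d 1"] d by simp
qed

lemma nontang_max_continuous_Lp:
  fixes \<alpha> :: real and u0 :: "real \<Rightarrow> real"
  assumes \<alpha>: "\<alpha> \<ge> 0" and cont: "continuous_on UNIV u0" and p: "p \<ge> 1"
    and int: "integrable lborel (\<lambda>x. \<bar>u0 x\<bar> powr p)"
  shows "continuous_on UNIV (\<lambda>x. enn2real (nontang_max \<alpha> u0 x))"
  unfolding continuous_on_iff
proof (intro ballI allI impI)
  fix x0 \<epsilon> :: real assume "\<epsilon> > 0"
  then have e: "\<epsilon> / 4 > 0" by simp
  obtain d where d: "d > 0" and osc:
    "\<And>h t y. \<bar>h\<bar> < d \<Longrightarrow> t > 0 \<Longrightarrow> \<bar>y - x0\<bar> \<le> \<alpha> * t \<Longrightarrow>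
      (\<integral>\<^sup>+z. ennreal (poisson_kernel (y - z) t * \<bar>\<bar>u0 (z + h)\<bar> - \<bar>u0 z\<bar>\<bar>) \<partial>lborel) \<le> ennreal (3 * (\<epsilon> / 4))"
    using nn_integral_poisson_translate_diff_small_Lp[OF \<alpha> cont p int e] by blast
  have "dist (enn2real (nontang_max \<alpha> u0 x)) (enn2real (nontang_max \<alpha> u0 x0)) < \<epsilon>"
    if "dist x x0 < d" for x
  proof -
    have "\<bar>enn2real (nontang_max \<alpha> u0 (x0 + (x - x0))) - enn2real (nontang_max \<alpha> u0 x0)\<bar> \<le> 3 * (\<epsilon> / 4)"
      using that e borel_measurable_continuous_onI[OF cont]
      by (intro nontang_max_translate_abs_diff_le nontang_max_finite_Lp[OF \<alpha> cont p int] osc)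
         (auto simp: dist_real_def)
    then show ?thesis
      using e by (simp add: dist_real_def)
  qed
  then show "\<exists>\<delta>>0. \<forall>x\<in>UNIV. dist x x0 < \<delta> \<longrightarrow>
      dist (enn2real (nontang_max \<alpha> u0 x)) (enn2real (nontang_max \<alpha> u0 x0)) < \<epsilon>"
    using d by blast
qed

theorem lemma20:
  fixes \<alpha> :: real and u0 :: "real \<Rightarrow> real" and p :: real
  assumes "\<alpha> > 0"
  shows "((continuous_on UNIV u0 \<and> 1 \<le> p \<and> integrable lborel (\<lambda>x. \<bar>u0 x\<bar> powr p))
           \<longrightarrow> (\<forall>x. nontang_max \<alpha> u0 x \<noteq> \<infinity>)
               \<and> continuous_on UNIV (\<lambda>x. enn2real (nontang_max \<alpha> u0 x)))
       \<and> ((bounded (range u0) \<and> (\<exists>L. L-lipschitz_on UNIV u0))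
           \<longrightarrow> (\<forall>x. nontang_max \<alpha> u0 x \<noteq> \<infinity>)
               \<and> bounded (range (\<lambda>x. enn2real (nontang_max \<alpha> u0 x)))
               \<and> (\<exists>L. L-lipschitz_on UNIV (\<lambda>x. enn2real (nontang_max \<alpha> u0 x)))
               \<and> Lip (\<lambda>x. enn2real (nontang_max \<alpha> u0 x)) \<le> Lip u0)"
proof -
  have \<alpha>: "\<alpha> \<ge> 0" using assms by simp
  show ?thesis
    using nontang_max_finite_Lp[OF \<alpha>] nontang_max_continuous_Lp[OF \<alpha>]
      nontang_max_bounded_lipschitz[of u0 _ \<alpha>]
    by blast
qed

end
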